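(* Let $\boldsymbol Y$ be a multivariate Pareto distribution that is an extremal graphical model with respect to a tree $T=(V,E)$, and suppose the extremal variogram $\Gamma^{(m)}$ exists for all $m\in V$. Then for every $m\in V$ and all $i,j\in V$, $$\Gamma^{(m)}_{ij}=\sum_{(s,t)\in\mathrm{ph}(ij)}\Gamma^{(m)}_{st},$$ where $\mathrm{ph}(ij)$ is the set of edges on the unique path between $i$ and $j$ in $T$; that is, $\Gamma^{(m)}$ is an additive tree metric on $T$.
   Context: $V=\{1,\dots,d\}$, $\mathcal L=\{\boldsymbol x\in[0,\infty)^d:\|\boldsymbol x\|_\infty>1\}$. A multivariate Pareto distribution is a random vector $\boldsymbol Y$ on $\mathcal L$ with $\mathbb P(Y_i>1)>0$ for all $i$ and $\mathbb P(\boldsymbol Y\in tA)=t^{-1}\mathbb P(\boldsymbol Y\in A)$ for $t\ge1$, Borel $A\subset\mathcal L$. $\boldsymbol Y^m$ denotes $\boldsymbol Y$ conditioned on $\{Y_m>1\}$. For disjoint $A,B,C\subset V$, $\boldsymbol Y_A\perp_e\boldsymbol Y_C\mid\boldsymbol Y_B$ means $\boldsymbol Y^m_A\perp\!\!\!\perp\boldsymbol Y^m_C\mid\boldsymbol Y^m_B$ for all $m\in V$; $\boldsymbol Y$ is an extremal graphical model on $T$ if $\boldsymbol Y_A\perp_e\boldsymbol Y_C\mid\boldsymbol Y_B$ whenever $B$ separates $A$ from $C$ in $T$. The extremal variogram rooted at $m$ is $\Gamma^{(m)}_{ij}=\operatorname{Var}\{\log Y^m_i-\log Y^m_j\}$,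 and it exists if all these are in $[0,\infty)$. *)

theory Defs
  imports "HOL-Probability.Probability"
begin

(* Index set V = {1..d} is modelled by a finite type 'd (V = UNIV); vectors in
   [0,\<infinity>)^d live in real^'d.  A random vector is represented by its law, a
   Borel probability measure on real^'d. *)

definition L_set :: "(real^'d::finite) set" where
  "L_set = {x. (\<forall>i. 0 \<le> x$i) \<and> (\<exists>i. 1 < x$i)}"

definition multivariate_pareto :: "(real^'d::finite) measure \<Rightarrow> bool" where
  "multivariate_pareto P \<longleftrightarrow>
     prob_space P \<and> sets P = sets borel \<and> emeasure P L_set = 1 \<and>
     (\<forall>i. measure P {x. 1 < x$i} > 0) \<and>
     (\<forall>t::real. \<forall>A \<in> sets borel. t \<ge> 1 \<and> A \<subseteq> L_set \<longrightarrow>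
        measure P ((\<lambda>x. t *\<^sub>R x) ` A) = measure P A / t)"

(* law of Y^m = Y conditioned on {Y_m > 1} *)
definition cond_law :: "(real^'d::finite) measure \<Rightarrow> 'd \<Rightarrow> (real^'d) measure" where
  "cond_law P m = uniform_measure P {x. 1 < x$m}"

definition coord_sigma :: "'d set \<Rightarrow> (real^'d::finite) measure" where
  "coord_sigma A = sigma UNIV {{x. x$i \<in> S} | i S. i \<in> A \<and> S \<in> sets borel}"

definition cond_indep :: "(real^'d::finite) measure \<Rightarrow> 'd set \<Rightarrow> 'd set \<Rightarrow> 'd set \<Rightarrow> bool" where
  "cond_indep Q A B C \<longleftrightarrow>
     (\<forall>X \<in> sets (coord_sigma A). \<forall>Z \<in> sets (coord_sigma C).
        AE x in Q. real_cond_exp Q (coord_sigma B) (indicator (X \<inter> Z)) x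
          = real_cond_exp Q (coord_sigma B) (indicator X) x
            * real_cond_exp Q (coord_sigma B) (indicator Z) x)"

definition extremal_cond_indep :: "(real^'d::finite) measure \<Rightarrow> 'd set \<Rightarrow> 'd set \<Rightarrow> 'd set \<Rightarrow> bool" where
  "extremal_cond_indep P A B C \<longleftrightarrow> (\<forall>m. cond_indep (cond_law P m) A B C)"

(* undirected simple graphs on the vertex type: symmetric irreflexive edge relation *)
definition is_path :: "('d \<times> 'd) set \<Rightarrow> 'd list \<Rightarrow> bool" where
  "is_path E xs \<longleftrightarrow> xs \<noteq> [] \<and> distinct xs \<and>
     (\<forall>k. Suc k < length xs \<longrightarrow> (xs!k, xs!Suc k) \<in> E)"

definition is_cycle :: "('d \<times> 'd) set \<Rightarrow> 'd list \<Rightarrow> bool" where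
  "is_cycle E xs \<longleftrightarrow> is_path E xs \<and> 3 \<le> length xs \<and> (last xs, hd xs) \<in> E"

definition is_tree :: "('d \<times> 'd) set \<Rightarrow> bool" where
  "is_tree E \<longleftrightarrow> sym E \<and> irrefl E \<and>
     (\<forall>i j. \<exists>xs. is_path E xs \<and> hd xs = i \<and> last xs = j) \<and>
     (\<nexists>xs. is_cycle E xs)"

definition path_edges :: "'d list \<Rightarrow> ('d \<times> 'd) set" where
  "path_edges xs = {(xs!k, xs!Suc k) | k. Suc k < length xs}"

(* ph(ij): edges (oriented from i to j) on the unique path between i and j *)
definition ph :: "('d \<times> 'd) set \<Rightarrow> 'd \<Rightarrow> 'd \<Rightarrow> ('d \<times> 'd) set" where
  "ph E i j = path_edges (THE xs. is_path E xs \<and> hd xs = i \<and> last xs = j)"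

definition separates :: "('d \<times> 'd) set \<Rightarrow> 'd set \<Rightarrow> 'd set \<Rightarrow> 'd set \<Rightarrow> bool" where
  "separates E A B C \<longleftrightarrow> (\<forall>a\<in>A. \<forall>c\<in>C. \<forall>xs. is_path E xs \<and> hd xs = a \<and> last xs = c
        \<longrightarrow> set xs \<inter> B \<noteq> {})"

definition extremal_graphical :: "(real^'d::finite) measure \<Rightarrow> ('d \<times> 'd) set \<Rightarrow> bool" where
  "extremal_graphical P E \<longleftrightarrow>
     (\<forall>A B C. A \<inter> B = {} \<and> A \<inter> C = {} \<and> B \<inter> C = {} \<and> separates E A B C
        \<longrightarrow> extremal_cond_indep P A B C)"

definition variogram :: "(real^'d::finite) measure \<Rightarrow> 'd \<Rightarrow> 'd \<Rightarrow> 'd \<Rightarrow> real" where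
  "variogram P m i j =
     prob_space.variance (cond_law P m) (\<lambda>x. ln (x$i) - ln (x$j))"

(* existence: log Y^m_i well defined (Y^m_i > 0 a.s.) and finite variance *)
definition variogram_exists :: "(real^'d::finite) measure \<Rightarrow> bool" where
  "variogram_exists P \<longleftrightarrow>
     (\<forall>m i. AE x in cond_law P m. 0 < x$i) \<and>
     (\<forall>m i j. integrable (cond_law P m) (\<lambda>x. (ln (x$i) - ln (x$j))\<^sup>2))"

end

theory Submission
  imports Defs
begin

text \<open>
  Induct along the tree path from \<open>i\<close> to \<open>j\<close>; let \<open>k\<close> be the vertex after \<open>i\<close>.
  Removing \<open>k\<close> from the tree separates the component \<open>A\<close> of \<open>i\<close> from the rest
  \<open>C \<ni> j\<close>, so \<open>Y\<^sup>k\<^sub>A\<close> and \<open>Y\<^sup>k\<^sub>C\<close> are conditionally independent given \<open>Y\<^sup>k\<^sub>k\<close>.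
  By homogeneity, \<open>Y\<^sup>k\<^sub>k\<close> is independent of every scale-invariant event, and together with
  the conditional independence every scale-invariant event of \<open>(Y\<^sup>k\<^sub>C, Y\<^sup>k\<^sub>k)\<close> is
  independent of \<open>(Y\<^sup>k\<^sub>A, Y\<^sup>k\<^sub>k)\<close>. Homogeneity again (letting the threshold on
  \<open>Y\<^sub>k\<close> decrease to \<open>0\<close>) carries this independence over to \<open>Y\<^sup>m\<close> for every
  root \<open>m \<in> A \<union> {k}\<close>. As \<open>log Y\<^sub>j - log Y\<^sub>k\<close> is scale invariant, it is then
  independent of \<open>log Y\<^sub>i - log Y\<^sub>k\<close> under \<open>Y\<^sup>m\<close>, so the variances add:
  \<open>\<Gamma>\<^sub>i\<^sub>j = \<Gamma>\<^sub>i\<^sub>k + \<Gamma>\<^sub>k\<^sub>j\<close> for the variogram rooted at \<open>m\<close>. Roots in \<open>C\<close>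
  follow by symmetry.
\<close>

section \<open>Paths in trees\<close>

definition walk :: "('d \<times> 'd) set \<Rightarrow> 'd list \<Rightarrow> bool" where
  "walk E xs \<longleftrightarrow> xs \<noteq> [] \<and> successively (\<lambda>x y. (x, y) \<in> E) xs"

lemma is_path_iff_walk: "is_path E xs \<longleftrightarrow> walk E xs \<and> distinct xs"
  unfolding is_path_def walk_def successively_conv_nth by auto

lemma walk_prefix: "walk E (xs @ ys) \<Longrightarrow> xs \<noteq> [] \<Longrightarrow> walk E xs"
  unfolding walk_def by (simp add: successively_append_iff)

lemma walk_join: "walk E (xs @ [c]) \<Longrightarrow> walk E (c # ys) \<Longrightarrow> walk E (xs @ c # ys)"
  unfolding walk_def by (cases ys) (auto simp: successively_append_iff)

lemma walk_Cons: "walk E (x # xs) \<longleftrightarrow> xs = [] \<or> (x, hd xs) \<in> E \<and> walk E xs"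
  unfolding walk_def by (auto simp: successively_Cons)

lemma walk_rev: "sym E \<Longrightarrow> walk E xs \<Longrightarrow> walk E (rev xs)"
  unfolding walk_def by (auto elim: successively_mono symE)

lemma walk_to_path:
  assumes "walk E ws"
  obtains zs where "is_path E zs" "hd zs = hd ws" "last zs = last ws" "set zs \<subseteq> set ws"
  using assms
proof (induction "length ws" arbitrary: ws rule: less_induct)
  case less
  show ?case
  proof (cases "distinct ws")
    case True
    with less.prems show ?thesis by (auto simp: is_path_iff_walk)
  next
    case False
    then obtain xs y ys zs where ws: "ws = xs @ [y] @ ys @ [y] @ zs"
      using not_distinct_decomp by blast
    let ?ws' = "xs @ [y] @ zs"
    have "walk E ?ws'"
      using \<open>walk E ws\<close> unfolding ws walk_def
      by (auto simp: successively_append_iff successively_Cons)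
    moreover have "hd ?ws' = hd ws" "last ?ws' = last ws" "set ?ws' \<subseteq> set ws"
      unfolding ws by (cases xs; cases zs; auto)+
    ultimately show ?thesis
      using less.hyps[of ?ws'] less.prems(1) unfolding ws by force
  qed
qed

lemma cycle_of_paths_from_common_neighbour:
  assumes "sym E" and a: "a \<notin> set xs" "a \<notin> set ys"
    and paths: "is_path E xs" "is_path E ys" and edges: "(a, hd xs) \<in> E" "(a, hd ys) \<in> E"
    and "hd xs \<noteq> hd ys" and "last xs = last ys"
  obtains cy where "is_cycle E cy"
proof -
  have "xs \<noteq> []" "ys \<noteq> []" using paths by (auto simp: is_path_def)
  then have common: "\<exists>v\<in>set xs. v \<in> set ys" using \<open>last xs = last ys\<close> by (metis last_in_set)
  obtain p c r where xs: "xs = p @ c # r" and "c \<in> set ys" and p: "\<forall>v\<in>set p. v \<notin> set ys"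
    using split_list_first_prop[OF common] by blast
  then obtain q s where ys: "ys = q @ c # s" by (blast dest: split_list)
  \<comment> \<open>follow xs from a to its first vertex c on ys, then ys backwards to its start\<close>
  define cy where "cy = a # p @ c # rev q"
  have "walk E (p @ [c])"
    using walk_prefix[of E "p @ [c]" r] paths(1) unfolding xs is_path_iff_walk by simp
  moreover have "hd (p @ [c]) = hd xs" unfolding xs by (cases p) auto
  ultimately have "walk E (a # p @ [c])" using edges(1) walk_Cons by fastforce
  moreover have "walk E (c # rev q)"
    using walk_rev[OF \<open>sym E\<close>, of "q @ [c]"] paths(2) unfolding ys is_path_iff_walk walk_def
    by (auto simp: successively_append_iff)
  ultimately have "walk E cy"
    unfolding cy_def using walk_join[of E "a # p"] by simp
  moreover have "distinct cy"
    using paths a p \<open>c \<in> set ys\<close> unfolding cy_def xs ys is_path_iff_walk by auto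
  moreover have "3 \<le> length cy"
    using \<open>hd xs \<noteq> hd ys\<close> unfolding cy_def xs ys by (cases p; cases q) auto
  moreover have "(last cy, hd cy) \<in> E"
  proof -
    have "last cy = hd ys" unfolding cy_def ys by (cases q) (auto simp: last_rev)
    then show ?thesis using edges(2) \<open>sym E\<close> unfolding cy_def by (auto elim: symE)
  qed
  ultimately show thesis using that unfolding is_cycle_def is_path_iff_walk by blast
qed

lemma tree_path_unique:
  assumes "is_tree E" and "is_path E xs" "is_path E ys"
    and "hd xs = hd ys" "last xs = last ys"
  shows "xs = ys"
  using assms(2-)
proof (induction xs arbitrary: ys)
  case Nil
  then show ?case by (simp add: is_path_def)
next
  case (Cons a xs)
  obtain ys' where ys: "ys = a # ys'"
    using Cons.prems(2,3) by (cases ys) (auto simp: is_path_def)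
  consider "xs = []" | "ys' = []" | "xs \<noteq> []" "ys' \<noteq> []" by blast
  then show ?case
  proof cases
    case 1
    with Cons.prems ys have "a \<notin> set ys'" "ys' \<noteq> [] \<Longrightarrow> last ys' = a"
      by (auto simp: is_path_def)
    then show ?thesis using 1 ys by (metis last_in_set)
  next
    case 2
    with Cons.prems ys have "a \<notin> set xs" "xs \<noteq> [] \<Longrightarrow> last xs = a"
      by (auto simp: is_path_def)
    then show ?thesis using 2 ys by (metis last_in_set)
  next
    case 3
    have paths: "is_path E xs" "is_path E ys'" and edges: "(a, hd xs) \<in> E" "(a, hd ys') \<in> E"
      using Cons.prems(1,2) 3 unfolding ys is_path_iff_walk by (auto simp: walk_Cons)
    have "last xs = last ys'" using Cons.prems(4) 3 ys by simp
    show ?thesis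
    proof (cases "hd xs = hd ys'")
      case True
      then show ?thesis using Cons.IH[OF paths] \<open>last xs = last ys'\<close> ys by simp
    next
      case False
      have "a \<notin> set xs" "a \<notin> set ys'" using Cons.prems(1,2) ys by (auto simp: is_path_def)
      with assms(1) paths edges False \<open>last xs = last ys'\<close> show ?thesis
        unfolding is_tree_def by (metis cycle_of_paths_from_common_neighbour)
    qed
  qed
qed

lemma ph_tree_path: "is_tree E \<Longrightarrow> is_path E xs \<Longrightarrow> ph E (hd xs) (last xs) = path_edges xs"
  unfolding ph_def by (rule arg_cong[of _ _ path_edges], rule the_equality)
    (auto intro: tree_path_unique[symmetric])

lemma path_edges_singleton [simp]: "path_edges [v] = {}"
  unfolding path_edges_def by simp

lemma path_edges_conv_zip: "path_edges xs = set (zip xs (tl xs))"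
  unfolding path_edges_def set_zip by (auto simp: nth_tl)

lemma path_edges_Cons: "xs \<noteq> [] \<Longrightarrow> path_edges (a # xs) = insert (a, hd xs) (path_edges xs)"
  by (cases xs) (simp_all add: path_edges_conv_zip)

lemma path_edges_subset: "path_edges ys \<subseteq> set ys \<times> set ys"
  unfolding path_edges_def by auto

definition reachable_avoiding :: "('d \<times> 'd) set \<Rightarrow> 'd \<Rightarrow> 'd \<Rightarrow> 'd set" where
  "reachable_avoiding E k i = {v. \<exists>ws. walk E ws \<and> hd ws = i \<and> last ws = v \<and> k \<notin> set ws}"

lemma start_in_reachable_avoiding: "i \<noteq> k \<Longrightarrow> i \<in> reachable_avoiding E k i"
  unfolding reachable_avoiding_def walk_def by (intro CollectI exI[of _ "[i]"]) simp

lemma avoided_notin_reachable_avoiding: "k \<notin> reachable_avoiding E k i"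
  unfolding reachable_avoiding_def walk_def by (auto dest: last_in_set)

lemma separates_reachable_avoiding:
  "separates E (reachable_avoiding E k i) {k} (UNIV - reachable_avoiding E k i - {k})"
  unfolding separates_def
proof (intro ballI allI impI)
  fix a c zs
  assume a: "a \<in> reachable_avoiding E k i" and c: "c \<in> UNIV - reachable_avoiding E k i - {k}"
    and zs: "is_path E zs \<and> hd zs = a \<and> last zs = c"
  obtain ws where ws: "walk E ws" "hd ws = i" "last ws = a" "k \<notin> set ws"
    using a unfolding reachable_avoiding_def by blast
  show "set zs \<inter> {k} \<noteq> {}"
  proof
    assume "set zs \<inter> {k} = {}"
    have "ws = butlast ws @ [a]" using ws by (metis walk_def append_butlast_last_id)
    have "zs = a # tl zs" using zs by (metis is_path_def list.collapse)
    then have "walk E (butlast ws @ zs)"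
      using walk_join[of E "butlast ws" a "tl zs"] ws(1) zs \<open>ws = butlast ws @ [a]\<close>
      by (simp add: is_path_iff_walk)
    moreover have "hd (butlast ws @ zs) = i"
      using \<open>ws = butlast ws @ [a]\<close> ws(2) zs by (cases "butlast ws") auto
    ultimately have "c \<in> reachable_avoiding E k i"
      using ws zs \<open>set zs \<inter> {k} = {}\<close> unfolding reachable_avoiding_def
      by (intro CollectI exI[of _ "butlast ws @ zs"]) (auto dest: in_set_butlastD simp: is_path_def)
    then show False using c by blast
  qed
qed

lemma tree_path_last_notin_reachable_avoiding:
  assumes "is_tree E" "is_path E xs" "k \<in> set xs"
  shows "last xs \<notin> reachable_avoiding E k (hd xs)"
proof
  assume "last xs \<in> reachable_avoiding E k (hd xs)"
  then obtain ws where ws: "walk E ws" "hd ws = hd xs" "last ws = last xs" "k \<notin> set ws"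
    unfolding reachable_avoiding_def by blast
  obtain zs where "is_path E zs" "hd zs = hd xs" "last zs = last xs" "set zs \<subseteq> set ws"
    using walk_to_path[OF ws(1)] ws(2,3) by metis
  with assms have "set xs \<subseteq> set ws" using tree_path_unique by metis
  then show False using ws(4) assms(3) by blast
qed

section \<open>Coordinate sigma-algebras and conditional independence\<close>

lemma space_coord_sigma [simp]: "space (coord_sigma S) = UNIV"
  unfolding coord_sigma_def by simp

lemma sets_coord_sigma:
  "sets (coord_sigma S) = sigma_sets UNIV {{x. x$i \<in> T} | i T. i \<in> S \<and> T \<in> sets borel}"
  unfolding coord_sigma_def by (rule sets_measure_of) simp

lemma coord_vimage_in_coord_sigma:
  "i \<in> S \<Longrightarrow> T \<in> sets borel \<Longrightarrow> {x. x$i \<in> T} \<in> sets (coord_sigma S)"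
  unfolding sets_coord_sigma by (rule sigma_sets.Basic) blast

lemma sets_coord_sigma_subset_borel: "sets (coord_sigma S) \<subseteq> sets (borel :: (real^'d::finite) measure)"
proof -
  have "{{x::real^'d. x$i \<in> T} | i T. i \<in> S \<and> T \<in> sets borel} \<subseteq> sets borel"
    by auto
  from sets.sigma_sets_subset[OF this] show ?thesis unfolding sets_coord_sigma by simp
qed

lemma coord_sigma_mono: "S \<subseteq> S' \<Longrightarrow> sets (coord_sigma S) \<subseteq> sets (coord_sigma S')"
  unfolding sets_coord_sigma by (rule sigma_sets_mono') auto

lemma measurable_coord_sigma_vec_nth: "i \<in> S \<Longrightarrow> (\<lambda>x. x$i) \<in> borel_measurable (coord_sigma S)"
  by (rule measurableI) (auto simp: vimage_def intro!: coord_vimage_in_coord_sigma)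

lemma measurable_coord_sigma_scaleR:
  assumes "0 < t"
  shows "(\<lambda>x::real^'d::finite. t *\<^sub>R x) \<in> coord_sigma S \<rightarrow>\<^sub>M coord_sigma S"
  unfolding coord_sigma_def
proof (rule measurable_measure_of)
  fix A assume "A \<in> {{x::real^'d. x$i \<in> T} | i T. i \<in> S \<and> T \<in> sets borel}"
  then obtain i T where A: "A = {x. x$i \<in> T}" "i \<in> S" "T \<in> sets borel" by blast
  have "(\<lambda>y::real. t * y) -` T \<inter> space borel \<in> sets borel"
    using A(3) by (intro measurable_sets[of _ borel]) simp_all
  then have "{x. x$i \<in> (\<lambda>y. t * y) -` T} \<in> sets (coord_sigma S)"
    using A(2) by (intro coord_vimage_in_coord_sigma) simp_all
  then show "(\<lambda>x. t *\<^sub>R x) -` A \<inter> space (sigma UNIV {{x. x$i \<in> T} | i T. i \<in> S \<and> T \<in> sets borel}) \<in>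
      sets (sigma UNIV {{x. x$i \<in> T} | i T. i \<in> S \<and> T \<in> sets borel})"
    unfolding A(1) coord_sigma_def[symmetric] by (simp add: vimage_def)
qed auto

definition coord_rectangles :: "'d set \<Rightarrow> 'd set \<Rightarrow> (real^'d::finite) set set" where
  "coord_rectangles S S' = {X \<inter> Z | X Z. X \<in> sets (coord_sigma S) \<and> Z \<in> sets (coord_sigma S')}"

lemma Int_stable_coord_rectangles: "Int_stable (coord_rectangles S S')"
  unfolding Int_stable_def coord_rectangles_def
proof safe
  fix X Z X' Z'
  assume "X \<in> sets (coord_sigma S)" "Z \<in> sets (coord_sigma S')"
    "X' \<in> sets (coord_sigma S)" "Z' \<in> sets (coord_sigma S')"
  then show "\<exists>X'' Z''. X \<inter> Z \<inter> (X' \<inter> Z') = X'' \<inter> Z'' \<and>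
      X'' \<in> sets (coord_sigma S) \<and> Z'' \<in> sets (coord_sigma S')"
    by (intro exI[of _ "X \<inter> X'"] exI[of _ "Z \<inter> Z'"]) auto
qed

lemma sets_coord_sigma_Un: "sets (coord_sigma (S \<union> S')) = sigma_sets UNIV (coord_rectangles S S')"
proof
  have "{x. x$i \<in> T} \<in> coord_rectangles S S'" if "i \<in> S \<union> S'" "T \<in> sets borel" for i T
  proof -
    have "UNIV \<in> sets (coord_sigma S)" "UNIV \<in> sets (coord_sigma S')"
      using sets.top space_coord_sigma by metis+
    with that coord_vimage_in_coord_sigma[of i _ T] show ?thesis
      unfolding coord_rectangles_def by blast
  qed
  then show "sets (coord_sigma (S \<union> S')) \<subseteq> sigma_sets UNIV (coord_rectangles S S')"
    unfolding sets_coord_sigma[of "S \<union> S'"] by (intro sigma_sets_mono) auto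
next
  have "coord_rectangles S S' \<subseteq> sets (coord_sigma (S \<union> S'))"
    unfolding coord_rectangles_def using coord_sigma_mono[of S "S \<union> S'"] coord_sigma_mono[of S' "S \<union> S'"]
    by blast
  then show "sigma_sets UNIV (coord_rectangles S S') \<subseteq> sets (coord_sigma (S \<union> S'))"
    using sets.sigma_sets_subset[of "coord_rectangles S S'" "coord_sigma (S \<union> S')"] by simp
qed

lemma sets_coord_sigma_singleton:
  "sets (coord_sigma {k}) = sigma_sets UNIV (range (\<lambda>a. {x::real^'d::finite. a < x$k}))"
proof -
  have "sets (borel :: real measure) = sigma_sets UNIV (range greaterThan)"
    by (subst borel_Ioi) (rule sets_measure_of, simp)
  then have "{{x::real^'d. x$k \<in> T} | T. T \<in> sets borel}
      = sigma_sets UNIV {(\<lambda>x. x$k) -` T \<inter> UNIV | T. T \<in> range greaterThan}"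
    using sigma_sets_vimage_commute[of "\<lambda>x::real^'d. x$k" UNIV UNIV "range greaterThan"]
    by (simp add: vimage_def)
  also have "{(\<lambda>x. x$k) -` T \<inter> UNIV | T. T \<in> range greaterThan} = range (\<lambda>a. {x::real^'d. a < x$k})"
    by (auto simp: vimage_def)
  finally have "sigma_sets UNIV {{x::real^'d. x$k \<in> T} | T. T \<in> sets borel}
      = sigma_sets UNIV (range (\<lambda>a. {x::real^'d. a < x$k}))"
    by (simp add: sigma_sets_sigma_sets_eq)
  moreover have "{{x::real^'d. x$i \<in> T} | i T. i \<in> {k} \<and> T \<in> sets borel} = {{x. x$k \<in> T} | T. T \<in> sets borel}"
    by blast
  ultimately show ?thesis unfolding sets_coord_sigma by simp
qed

lemma (in prob_space) prob_Int_eq_mult_sigma_sets: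
  assumes "Int_stable G" "G \<subseteq> events" "R \<in> events"
    and "\<And>H. H \<in> G \<Longrightarrow> prob (R \<inter> H) = prob R * prob H"
    and "H \<in> sigma_sets (space M) G"
  shows "prob (R \<inter> H) = prob R * prob H"
proof -
  have "indep_set {R} G" using assms(2-4) by (intro indep_setI) auto
  then have "indep_set (sigma_sets (space M) {R}) (sigma_sets (space M) G)"
    using assms(1) by (intro indep_set_sigma_sets) (auto simp: Int_stable_def)
  from indep_setD[OF this sigma_sets.Basic[of R "{R}"] assms(5)] show ?thesis by simp
qed

lemma (in prob_space) integral_indicator_mult_eq_0_sigma_sets:
  fixes g :: "'a \<Rightarrow> real"
  assumes G: "Int_stable G" "G \<subseteq> events"
    and g: "integrable M g" "(\<integral>x. g x \<partial>M) = 0"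
    and base: "\<And>H. H \<in> G \<Longrightarrow> (\<integral>x. indicator H x * g x \<partial>M) = 0"
    and H: "H \<in> sigma_sets (space M) G"
  shows "(\<integral>x. indicator H x * g x \<partial>M) = 0"
  using G(1) order_trans[OF G(2) sets.space_closed] H
proof (induction rule: sigma_sets_induct_disjoint)
  case (basic A)
  then show ?case by (rule base)
next
  case empty
  then show ?case by simp
next
  case (compl A)
  have A: "A \<in> events" using compl(1) G(2) sets.sigma_sets_subset by blast
  have "(\<integral>x. indicator (space M - A) x * g x \<partial>M) = (\<integral>x. g x - indicator A x * g x \<partial>M)"
    by (intro Bochner_Integration.integral_cong) (auto simp: indicator_def)
  also have "\<dots> = 0"
    using compl(2) g A by (simp add: integrable_real_mult_indicator mult.commute)
  finally show ?case .
next
  case (union A)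
  have A: "range A \<subseteq> events" using union(2) G(2) sets.sigma_sets_subset by blast
  then have "set_integrable M (\<Union>i. A i) g"
    using g(1) by (simp add: set_integrable_def integrable_real_mult_indicator mult.commute)
  with A union(1) have "(LINT x:(\<Union>i. A i)|M. g x) = (\<Sum>i. (LINT x:A i|M. g x))"
    by (intro lebesgue_integral_countable_add) (auto simp: disjoint_family_on_def)
  then show ?case using union(3) by (simp add: set_lebesgue_integral_def)
qed

lemma (in prob_space) indep_var_vimageI:
  assumes "random_variable S X" "random_variable T Y"
    and "\<And>A B. A \<in> sets S \<Longrightarrow> B \<in> sets T \<Longrightarrow>
      prob (X -` A \<inter> space M \<inter> (Y -` B \<inter> space M)) = prob (X -` A \<inter> space M) * prob (Y -` B \<inter> space M)"
  shows "indep_var S X T Y"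
proof -
  have Int_stable: "Int_stable {Z -` A \<inter> space M | A. A \<in> sets N}" for Z :: "'a \<Rightarrow> 'b" and N
  proof (intro Int_stableI, safe)
    fix A B assume "A \<in> sets N" "B \<in> sets N"
    then show "\<exists>C. Z -` A \<inter> space M \<inter> (Z -` B \<inter> space M) = Z -` C \<inter> space M \<and> C \<in> sets N"
      by (intro exI[of _ "A \<inter> B"]) auto
  qed
  have "indep_set {X -` A \<inter> space M | A. A \<in> sets S} {Y -` A \<inter> space M | A. A \<in> sets T}"
    using assms by (intro indep_setI) (auto intro: measurable_sets)
  then show ?thesis
    unfolding indep_var_eq using assms(1,2) by (intro conjI indep_set_sigma_sets Int_stable)
qed

lemma (in prob_space) variance_cong_AE:
  fixes X Y :: "'a \<Rightarrow> real"
  assumes AE: "AE x in M. X x = Y x" and meas: "random_variable borel X" "random_variable borel Y"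
  shows "variance X = variance Y"
proof -
  have "expectation X = expectation Y" using meas AE by (rule integral_cong_AE)
  have "AE x in M. (X x - expectation X)\<^sup>2 = (Y x - expectation Y)\<^sup>2"
    using AE by eventually_elim (simp add: \<open>expectation X = expectation Y\<close>)
  then show ?thesis using meas by (intro integral_cong_AE) simp_all
qed
lemma (in prob_space) variance_uminus:
  fixes X :: "'a \<Rightarrow> real"
  shows "variance (\<lambda>x. - X x) = variance X"
proof -
  have "(\<lambda>x. (- X x - expectation (\<lambda>x. - X x))\<^sup>2) = (\<lambda>x. (X x - expectation X)\<^sup>2)"
    by (simp add: power2_commute)
  then show ?thesis by simp
qed

lemma (in prob_space) variance_diff_indep:
  fixes U V :: "'a \<Rightarrow> real"
  assumes indep: "indep_var borel U borel V"
    and sq: "integrable M (\<lambda>x. (U x)\<^sup>2)" "integrable M (\<lambda>x. (V x)\<^sup>2)"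
  shows "variance (\<lambda>x. U x - V x) = variance U + variance V"
proof -
  have U: "integrable M U" and V: "integrable M V"
    using indep_var_rv1[OF indep] indep_var_rv2[OF indep] sq
    by (auto intro: square_integrable_imp_integrable)
  have UV: "integrable M (\<lambda>x. U x * V x)" "expectation (\<lambda>x. U x * V x) = expectation U * expectation V"
    using indep_var_integrable[OF indep U V] indep_var_lebesgue_integral[OF indep U V] by auto
  have sq_diff: "(U x - V x)\<^sup>2 = (U x)\<^sup>2 - 2 * (U x * V x) + (V x)\<^sup>2" for x
    by (simp add: power2_diff algebra_simps)
  have "variance (\<lambda>x. U x - V x)
      = expectation (\<lambda>x. (U x)\<^sup>2) - 2 * expectation (\<lambda>x. U x * V x) + expectation (\<lambda>x. (V x)\<^sup>2)
        - (expectation U - expectation V)\<^sup>2"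
    using U V UV sq by (subst variance_eq) (simp_all add: sq_diff)
  also have "\<dots> = (expectation (\<lambda>x. (U x)\<^sup>2) - (expectation U)\<^sup>2) + (expectation (\<lambda>x. (V x)\<^sup>2) - (expectation V)\<^sup>2)"
    using UV(2) by (simp add: power2_diff)
  also have "\<dots> = variance U + variance V"
    using U V sq by (simp add: variance_eq)
  finally show ?thesis .
qed

lemma cond_indep_commute: "cond_indep Q A B C \<Longrightarrow> cond_indep Q C B A"
  unfolding cond_indep_def
proof (intro ballI)
  fix X Z
  assume CI: "\<forall>X\<in>sets (coord_sigma A). \<forall>Z\<in>sets (coord_sigma C).
      AE x in Q. real_cond_exp Q (coord_sigma B) (indicator (X \<inter> Z)) x
        = real_cond_exp Q (coord_sigma B) (indicator X) x * real_cond_exp Q (coord_sigma B) (indicator Z) x"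
    and "X \<in> sets (coord_sigma C)" "Z \<in> sets (coord_sigma A)"
  then have "AE x in Q. real_cond_exp Q (coord_sigma B) (indicator (Z \<inter> X)) x
      = real_cond_exp Q (coord_sigma B) (indicator Z) x * real_cond_exp Q (coord_sigma B) (indicator X) x"
    by blast
  then show "AE x in Q. real_cond_exp Q (coord_sigma B) (indicator (X \<inter> Z)) x
      = real_cond_exp Q (coord_sigma B) (indicator X) x * real_cond_exp Q (coord_sigma B) (indicator Z) x"
    by (simp add: Int_commute[of Z X] mult.commute)
qed

lemma subalgebra_coord_sigma: "sets M = sets borel \<Longrightarrow> subalgebra M (coord_sigma S)"
  using sets_coord_sigma_subset_borel by (simp add: subalgebra_def sets_eq_imp_space_eq)

lemma sigma_finite_subalgebra_coord_sigma:
  assumes "prob_space Q" "sets Q = sets borel"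
  shows "sigma_finite_subalgebra Q (coord_sigma S)"
proof -
  interpret prob_space Q by fact
  show ?thesis
    using subalgebra_coord_sigma[OF assms(2)]
    by (intro finite_measure_subalgebra_is_sigma_finite finite_measure_subalgebra.intro)
       (unfold_locales, auto)
qed

lemma cond_indep_integral_rectangle:
  fixes Q :: "(real^'d::finite) measure"
  assumes Q: "prob_space Q" "sets Q = sets borel" and CI: "cond_indep Q A B C"
    and X: "X \<in> sets (coord_sigma A)" and Z: "Z \<in> sets (coord_sigma C)" and K: "K \<in> sets (coord_sigma B)"
  defines "\<xi> \<equiv> real_cond_exp Q (coord_sigma B) (indicator X)"
  shows "(\<integral>x. indicator (Z \<inter> K) x * indicator X x \<partial>Q) = (\<integral>x. indicator (Z \<inter> K) x * \<xi> x \<partial>Q)"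
proof -
  interpret sigma_finite_subalgebra Q "coord_sigma B"
    by (rule sigma_finite_subalgebra_coord_sigma[OF Q])
  interpret prob_space Q by fact
  have sets: "X \<in> sets Q" "Z \<in> sets Q" "K \<in> sets Q"
    using X Z K sets_coord_sigma_subset_borel Q(2) by blast+
  have "integrable Q \<xi>"
    unfolding \<xi>_def using sets by (intro real_cond_exp_int) (simp add: emeasure_eq_measure)
  have \<xi>_meas: "\<xi> \<in> borel_measurable (coord_sigma B)" unfolding \<xi>_def by simp
  have "(\<integral>x. indicator (Z \<inter> K) x * (indicator X x :: real) \<partial>Q)
      = (\<integral>x. indicator K x * indicator (X \<inter> Z) x \<partial>Q)"
    by (intro Bochner_Integration.integral_cong) (auto simp: indicator_def)
  also have "\<dots> = (\<integral>x. indicator K x * real_cond_exp Q (coord_sigma B) (indicator (X \<inter> Z)) x \<partial>Q)"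
    using sets K
    by (intro real_cond_exp_intg(2)[symmetric]) (auto intro: integrable_real_mult_indicator simp: emeasure_eq_measure)
  also have "\<dots> = (\<integral>x. (indicator K x * \<xi> x) * real_cond_exp Q (coord_sigma B) (indicator Z) x \<partial>Q)"
    using CI X Z unfolding cond_indep_def \<xi>_def
    by (intro integral_cong_AE borel_measurable_times borel_measurable_indicator
        borel_measurable_cond_exp2 sets(3)) (auto simp: mult_ac elim!: AE_mp[OF _ AE_I2])
  also have "\<dots> = (\<integral>x. (indicator K x * \<xi> x) * indicator Z x \<partial>Q)"
    using sets K \<xi>_meas integrable_real_mult_indicator[of "K \<inter> Z" Q \<xi>] \<open>integrable Q \<xi>\<close>
    by (intro real_cond_exp_intg(2)) (auto simp: mult_ac indicator_inter_arith)
  also have "\<dots> = (\<integral>x. indicator (Z \<inter> K) x * \<xi> x \<partial>Q)"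
    by (intro Bochner_Integration.integral_cong) (auto simp: indicator_def)
  finally show ?thesis .
qed

lemma cond_indep_integral_indicator:
  fixes Q :: "(real^'d::finite) measure"
  assumes Q: "prob_space Q" "sets Q = sets borel" and CI: "cond_indep Q A B C"
    and X: "X \<in> sets (coord_sigma A)" and W: "W \<in> sets (coord_sigma (C \<union> B))"
  defines "\<xi> \<equiv> real_cond_exp Q (coord_sigma B) (indicator X)"
  shows "(\<integral>x. indicator W x * indicator X x \<partial>Q) = (\<integral>x. indicator W x * \<xi> x \<partial>Q)"
proof -
  interpret sigma_finite_subalgebra Q "coord_sigma B"
    by (rule sigma_finite_subalgebra_coord_sigma[OF Q])
  interpret prob_space Q by fact
  have "X \<in> sets Q" using X sets_coord_sigma_subset_borel Q(2) by blast
  then have int: "integrable Q (indicator X :: _ \<Rightarrow> real)" "integrable Q \<xi>" "(\<integral>x. \<xi> x \<partial>Q) = measure Q X"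
    unfolding \<xi>_def using real_cond_exp_int[of "indicator X"] by (simp_all add: emeasure_eq_measure)
  have diff: "(\<integral>x. indicator H x * (indicator X x - \<xi> x) \<partial>Q)
      = (\<integral>x. indicator H x * indicator X x \<partial>Q) - (\<integral>x. indicator H x * \<xi> x \<partial>Q)"
    if "H \<in> sets Q" for H
    using int(1,2)[THEN integrable_real_mult_indicator[OF that]]
    by (subst Bochner_Integration.integral_diff[symmetric]) (simp_all add: right_diff_distrib mult.commute)
  have rect: "coord_rectangles C B \<subseteq> events"
    using sets_coord_sigma_Un[of C B] sets_coord_sigma_subset_borel[of "C \<union> B"] Q(2)
    by (auto dest: sigma_sets.Basic)
  have "(\<integral>x. indicator W x * (indicator X x - \<xi> x) \<partial>Q) = 0"
  proof (rule integral_indicator_mult_eq_0_sigma_sets[OF Int_stable_coord_rectangles rect])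
    show "integrable Q (\<lambda>x. indicator X x - \<xi> x)" "(\<integral>x. indicator X x - \<xi> x \<partial>Q) = 0"
      using int \<open>X \<in> sets Q\<close> sets.sets_into_space by (simp_all add: Int_absorb2)
    show "W \<in> sigma_sets (space Q) (coord_rectangles C B)"
      using W sets_coord_sigma_Un[of C B] sets_eq_imp_space_eq[OF Q(2)] by simp
  next
    fix H assume "H \<in> coord_rectangles C B"
    then obtain Z K where "H = Z \<inter> K" "Z \<in> sets (coord_sigma C)" "K \<in> sets (coord_sigma B)"
      unfolding coord_rectangles_def by blast
    with diff rect \<open>H \<in> coord_rectangles C B\<close> show "(\<integral>x. indicator H x * (indicator X x - \<xi> x) \<partial>Q) = 0"
      using cond_indep_integral_rectangle[OF Q CI X] unfolding \<xi>_def by auto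
  qed
  moreover have "W \<in> sets Q" using W sets_coord_sigma_subset_borel Q(2) by blast
  ultimately show ?thesis using diff by simp
qed

section \<open>Homogeneity of multivariate Pareto laws\<close>

definition scale_invariant :: "(real^'d::finite) set \<Rightarrow> bool" where
  "scale_invariant R \<longleftrightarrow> (\<forall>t>0. \<forall>x. t *\<^sub>R x \<in> R \<longleftrightarrow> x \<in> R)"

lemma scale_invariant_UNIV [simp]: "scale_invariant UNIV"
  unfolding scale_invariant_def by simp

lemma scale_invariant_vimage:
  "(\<And>t x. 0 < t \<Longrightarrow> g (t *\<^sub>R x) = g x) \<Longrightarrow> scale_invariant (g -` A)"
  unfolding scale_invariant_def by simp

locale pareto =
  fixes P :: "(real^'d::finite) measure"
  assumes multivariate_pareto: "multivariate_pareto P"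
begin

abbreviation Q :: "'d \<Rightarrow> (real^'d) measure" where
  "Q m \<equiv> cond_law P m"

lemma prob_space_P: "prob_space P"
  using multivariate_pareto unfolding multivariate_pareto_def by blast

lemma sets_P [simp, measurable_cong]: "sets P = sets borel"
  using multivariate_pareto unfolding multivariate_pareto_def by blast

lemma space_P [simp]: "space P = UNIV"
  using sets_eq_imp_space_eq[OF sets_P] by simp

lemma measure_exceed_pos: "0 < measure P {x. 1 < x$i}"
  using multivariate_pareto unfolding multivariate_pareto_def by blast

lemma AE_L_set: "AE x in P. x \<in> L_set"
proof -
  interpret prob_space P by (rule prob_space_P)
  have "emeasure P L_set = 1" using multivariate_pareto unfolding multivariate_pareto_def by blast
  moreover from this have "L_set \<in> sets P" using emeasure_notin_sets by fastforce
  ultimately show ?thesis by (simp add: AE_in_set_eq_1 emeasure_eq_measure)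
qed

lemma measure_scaleR_vimage:
  assumes t: "1 \<le> t" and B: "B \<in> sets borel" "\<forall>x\<in>B. \<exists>i. 1 < x$i"
  shows "measure P {x. (1 / t) *\<^sub>R x \<in> B} = measure P B / t"
proof -
  \<comment> \<open>P is concentrated on \<open>L_set\<close>, so B may be cut down to the nonnegative orthant\<close>
  define N where "N = {x::real^'d. \<forall>i. 0 \<le> x$i}"
  have N: "N \<in> sets borel" unfolding N_def by measurable
  have restrict: "measure P (A \<inter> N) = measure P A" if "A \<in> sets borel" for A
    using AE_L_set that N by (intro measure_eq_AE) (auto simp: L_set_def N_def)
  have "(\<lambda>x. t *\<^sub>R x) ` (B \<inter> N) = {x. (1 / t) *\<^sub>R x \<in> B} \<inter> N"
    using t by (force simp: N_def zero_le_mult_iff image_iff intro: exI[of _ "(1 / t) *\<^sub>R _"])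
  moreover have "B \<inter> N \<subseteq> L_set" using B(2) unfolding L_set_def N_def by auto
  ultimately have "measure P ({x. (1 / t) *\<^sub>R x \<in> B} \<inter> N) = measure P (B \<inter> N) / t"
    using multivariate_pareto t B(1) N unfolding multivariate_pareto_def by (metis sets.Int)
  moreover have "{x. (1 / t) *\<^sub>R x \<in> B} \<in> sets borel" using B(1) by measurable
  ultimately show ?thesis using B(1) by (simp add: restrict)
qed

lemma measure_scale_invariant_Int_exceed:
  assumes R: "scale_invariant R" "R \<in> sets borel" and a: "1 \<le> a"
  shows "measure P (R \<inter> {x. a < x$k}) = measure P (R \<inter> {x. 1 < x$k}) / a"
proof -
  have "{x. (1 / a) *\<^sub>R x \<in> R \<inter> {x. 1 < x$k}} = R \<inter> {x. a < x$k}"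
    using a R(1) unfolding scale_invariant_def by (auto simp: field_simps)
  with measure_scaleR_vimage[OF a, of "R \<inter> {x. 1 < x$k}"] R(2) show ?thesis by auto
qed

lemma measure_Int_exceed_rescale:
  assumes R: "scale_invariant R" "R \<in> sets borel"
    and G: "G \<in> sets borel" "G \<subseteq> {x. 1 < x$m}" and s: "0 < s" "s \<le> 1"
  shows "measure P (R \<inter> G \<inter> {x. s < x$k}) = measure P (R \<inter> {x. s *\<^sub>R x \<in> G} \<inter> {x. 1 < x$k}) / s"
proof -
  have "{x. (1 / (1 / s)) *\<^sub>R x \<in> R \<inter> G \<inter> {x. s < x$k}} = R \<inter> {x. s *\<^sub>R x \<in> G} \<inter> {x. 1 < x$k}"
    using s R(1) unfolding scale_invariant_def by auto
  moreover have "R \<inter> G \<inter> {x. s < x$k} \<in> sets borel" "\<forall>x\<in>R \<inter> G \<inter> {x. s < x$k}. \<exists>i. 1 < x$i"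
    using R(2) G by auto
  ultimately show ?thesis
    using measure_scaleR_vimage[of "1 / s" "R \<inter> G \<inter> {x. s < x$k}"] s by (simp add: field_simps)
qed

lemma emeasure_exceed_nonzero_finite: "emeasure P {x. 1 < x$m} \<noteq> 0" "emeasure P {x. 1 < x$m} \<noteq> \<infinity>"
proof -
  interpret prob_space P by (rule prob_space_P)
  show "emeasure P {x. 1 < x$m} \<noteq> 0" "emeasure P {x. 1 < x$m} \<noteq> \<infinity>"
    using measure_exceed_pos[of m] by (simp_all add: emeasure_eq_measure)
qed

lemma prob_space_cond_law: "prob_space (Q m)"
  unfolding cond_law_def by (rule prob_space_uniform_measure[OF emeasure_exceed_nonzero_finite])

lemma sets_cond_law [simp, measurable_cong]: "sets (Q m) = sets borel"
  unfolding cond_law_def by simp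

lemma space_cond_law [simp]: "space (Q m) = UNIV"
  unfolding cond_law_def by simp

lemma measure_cond_law:
  "A \<in> sets borel \<Longrightarrow> measure (Q m) A = measure P ({x. 1 < x$m} \<inter> A) / measure P {x. 1 < x$m}"
  unfolding cond_law_def by (rule measure_uniform_measure[OF emeasure_exceed_nonzero_finite]) simp

lemma cond_law_indep_exceed:
  assumes R: "scale_invariant R" "R \<in> sets borel"
  shows "measure (Q k) (R \<inter> {x. a < x$k}) = measure (Q k) R * measure (Q k) {x. a < x$k}"
proof -
  have exceed: "{x::real^'d. a < x$k} \<in> sets borel" by measurable
  let ?c = "measure P {x. 1 < x$k}"
  have law: "measure (Q k) A = measure P ({x. 1 < x$k} \<inter> A) / ?c" if "A \<in> sets borel" for A
    using that by (rule measure_cond_law)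
  show ?thesis
  proof (cases "a < 1")
    case True
    then have "{x. 1 < x$k} \<inter> (R \<inter> {x. a < x$k}) = {x. 1 < x$k} \<inter> R"
      "{x. 1 < x$k} \<inter> {x::real^'d. a < x$k} = {x. 1 < x$k}"
      by auto
    then show ?thesis
      using law[of "R \<inter> {x. a < x$k}"] law[of R] law[OF exceed] R(2) exceed measure_exceed_pos[of k]
      by simp
  next
    case False
    then have "{x. 1 < x$k} \<inter> (R \<inter> {x. a < x$k}) = R \<inter> {x. a < x$k}"
      "{x. 1 < x$k} \<inter> {x::real^'d. a < x$k} = UNIV \<inter> {x. a < x$k}"
      "{x. 1 < x$k} \<inter> R = R \<inter> {x. 1 < x$k}"
      by auto
    moreover have "measure P (R \<inter> {x. a < x$k}) = measure P (R \<inter> {x. 1 < x$k}) / a"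
      "measure P (UNIV \<inter> {x. a < x$k}) = measure P (UNIV \<inter> {x. 1 < x$k}) / a"
      using R False by (intro measure_scale_invariant_Int_exceed; simp)+
    ultimately show ?thesis
      using law[of "R \<inter> {x. a < x$k}"] law[of R] law[OF exceed] R(2) exceed measure_exceed_pos[of k]
      by simp
  qed
qed

lemma cond_law_indep_coord:
  assumes R: "scale_invariant R" "R \<in> sets borel" and K: "K \<in> sets (coord_sigma {k})"
  shows "measure (Q k) (R \<inter> K) = measure (Q k) R * measure (Q k) K"
proof -
  interpret prob_space "Q k" by (rule prob_space_cond_law)
  show ?thesis
  proof (rule prob_Int_eq_mult_sigma_sets)
    show "Int_stable (range (\<lambda>a. {x::real^'d. a < x$k}))"
    proof (rule Int_stableI)
      fix A B assume "A \<in> range (\<lambda>a. {x::real^'d. a < x$k})" "B \<in> range (\<lambda>a. {x::real^'d. a < x$k})"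
      then obtain a b where "A = {x. a < x$k}" "B = {x. b < x$k}" by blast
      then have "A \<inter> B = {x. max a b < x$k}" by auto
      then show "A \<inter> B \<in> range (\<lambda>a. {x::real^'d. a < x$k})" by blast
    qed
    show "range (\<lambda>a. {x::real^'d. a < x$k}) \<subseteq> events" by auto
    show "R \<in> events" using R by simp
    show "K \<in> sigma_sets (space (Q k)) (range (\<lambda>a. {x::real^'d. a < x$k}))"
      unfolding space_cond_law sets_coord_sigma_singleton[symmetric] by (rule K)
  qed (auto intro: cond_law_indep_exceed[OF R])
qed

lemma integral_cond_law_mult_indicator:
  assumes R: "scale_invariant R" "R \<in> sets borel"
    and f: "f \<in> borel_measurable (coord_sigma {k})" "integrable (Q k) f"
  shows "(\<integral>x. f x * indicator R x \<partial>Q k) = (\<integral>x. f x \<partial>Q k) * measure (Q k) R"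
proof -
  interpret prob_space "Q k" by (rule prob_space_cond_law)
  have "indep_var borel f borel (indicator R)"
  proof (rule indep_var_vimageI)
    show "random_variable borel f"
      by (rule measurable_from_subalg[OF subalgebra_coord_sigma f(1)]) simp
    show "random_variable borel (indicator R :: _ \<Rightarrow> real)" using R(2) by simp
    fix A B :: "real set" assume "A \<in> sets borel" "B \<in> sets borel"
    have "f -` A \<in> sets (coord_sigma {k})" using measurable_sets[OF f(1) \<open>A \<in> sets borel\<close>] by simp
    moreover have "scale_invariant (indicator R -` B :: (real^'d) set)"
      using R(1) by (intro scale_invariant_vimage) (simp add: indicator_def scale_invariant_def)
    moreover have "(indicator R -` B :: (real^'d) set) \<in> sets borel"
      using measurable_sets[OF borel_measurable_indicator[OF R(2)] \<open>B \<in> sets borel\<close>] by simp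
    ultimately show "prob (f -` A \<inter> space (Q k) \<inter> (indicator R -` B \<inter> space (Q k)))
        = prob (f -` A \<inter> space (Q k)) * prob (indicator R -` B \<inter> space (Q k))"
      using cond_law_indep_coord[of "indicator R -` B" "f -` A" k] by (simp add: Int_commute mult.commute)
  qed
  moreover have "integrable (Q k) (indicator R :: _ \<Rightarrow> real)"
    using R(2) by (simp add: emeasure_eq_measure)
  ultimately show ?thesis using f(2) by (simp add: indep_var_lebesgue_integral)
qed

lemma cond_law_indep_scale_invariant:
  assumes CI: "cond_indep (Q k) A {k} C"
    and R: "scale_invariant R" "R \<in> sets (coord_sigma (C \<union> {k}))"
    and H: "H \<in> sets (coord_sigma (A \<union> {k}))"
  shows "measure (Q k) (R \<inter> H) = measure (Q k) R * measure (Q k) H"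
proof -
  interpret sigma_finite_subalgebra "Q k" "coord_sigma {k}"
    by (rule sigma_finite_subalgebra_coord_sigma[OF prob_space_cond_law sets_cond_law])
  interpret prob_space "Q k" by (rule prob_space_cond_law)
  have in_events: "sets (coord_sigma S) \<subseteq> events" for S
    using sets_coord_sigma_subset_borel by simp
  show ?thesis
  proof (rule prob_Int_eq_mult_sigma_sets[OF Int_stable_coord_rectangles])
    show "coord_rectangles A {k} \<subseteq> events"
      using sets_coord_sigma_Un[of A "{k}"] in_events[of "A \<union> {k}"]
        sigma_sets.Basic[of _ "coord_rectangles A {k}" UNIV] by blast
    show "R \<in> events" using R(2) in_events by blast
    show "H \<in> sigma_sets (space (Q k)) (coord_rectangles A {k})"
      using H sets_coord_sigma_Un[of A "{k}"] by simp
  next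
    fix H assume "H \<in> coord_rectangles A {k}"
    then obtain X K where H: "H = X \<inter> K"
      and X: "X \<in> sets (coord_sigma A)" and K: "K \<in> sets (coord_sigma {k})"
      unfolding coord_rectangles_def by blast
    define \<xi> where "\<xi> = real_cond_exp (Q k) (coord_sigma {k}) (indicator X)"
    have sets: "X \<in> events" "K \<in> events" "R \<in> events" using X K R(2) in_events by blast+
    have "integrable (Q k) \<xi>"
      unfolding \<xi>_def using sets by (intro real_cond_exp_int) (simp add: emeasure_eq_measure)
    have "R \<inter> K \<in> sets (coord_sigma (C \<union> {k}))"
      using R(2) K coord_sigma_mono[of "{k}" "C \<union> {k}"] by blast
    have "prob (R \<inter> H) = (\<integral>x. indicator (R \<inter> K) x * indicator X x \<partial>Q k)"
      unfolding H by (simp add: indicator_inter_arith[symmetric] Int_ac)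
    also have "\<dots> = (\<integral>x. indicator (R \<inter> K) x * \<xi> x \<partial>Q k)"
      unfolding \<xi>_def using prob_space_cond_law sets_cond_law CI X \<open>R \<inter> K \<in> _\<close>
      by (rule cond_indep_integral_indicator)
    also have "\<dots> = (\<integral>x. (\<xi> x * indicator K x) * indicator R x \<partial>Q k)"
      by (simp add: indicator_inter_arith mult_ac)
    also have "\<dots> = (\<integral>x. \<xi> x * indicator K x \<partial>Q k) * prob R"
      using R K sets \<open>integrable (Q k) \<xi>\<close> unfolding \<xi>_def
      by (intro integral_cond_law_mult_indicator) (auto intro: integrable_real_mult_indicator)
    also have "(\<integral>x. \<xi> x * indicator K x \<partial>Q k) = (\<integral>x. indicator K x * indicator X x \<partial>Q k)"
      unfolding \<xi>_def using sets K
      by (subst mult.commute, intro real_cond_exp_intg(2))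
         (auto simp: emeasure_eq_measure intro: integrable_real_mult_indicator)
    also have "\<dots> = prob H"
      unfolding H by (simp add: indicator_inter_arith[symmetric] Int_commute)
    finally show "prob (R \<inter> H) = prob R * prob H" by simp
  qed
qed

lemma measure_Int_exceed_eq_mult:
  assumes CI: "cond_indep (Q k) A {k} C"
    and R: "scale_invariant R" "R \<in> sets (coord_sigma (C \<union> {k}))"
    and G: "G \<in> sets (coord_sigma (A \<union> {k}))" "G \<subseteq> {x. 1 < x$m}" and s: "0 < s" "s \<le> 1"
  shows "measure P (R \<inter> G \<inter> {x. s < x$k}) = measure (Q k) R * measure P (G \<inter> {x. s < x$k})"
proof -
  let ?G' = "{x. s *\<^sub>R x \<in> G}"
  have G': "?G' \<in> sets (coord_sigma (A \<union> {k}))"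
    using measurable_sets[OF measurable_coord_sigma_scaleR[OF s(1)] G(1)] by (simp add: vimage_def)
  have borel: "R \<in> sets borel" "G \<in> sets borel" "?G' \<in> sets borel"
    using R(2) G(1) G' sets_coord_sigma_subset_borel by blast+
  \<comment> \<open>rescaling by \<open>s\<close> moves the threshold on \<open>x$k\<close> up to \<open>1\<close>, where \<open>Q k\<close> lives\<close>
  have "measure P (R \<inter> G \<inter> {x. s < x$k}) = measure P (R \<inter> ?G' \<inter> {x. 1 < x$k}) / s"
    by (rule measure_Int_exceed_rescale[OF R(1) borel(1,2) G(2) s])
  also have "\<dots> = measure (Q k) (R \<inter> ?G') * measure P {x. 1 < x$k} / s"
    using borel measure_exceed_pos[of k] by (simp add: measure_cond_law Int_ac)
  also have "\<dots> = measure (Q k) R * (measure (Q k) ?G' * measure P {x. 1 < x$k}) / s"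
    using cond_law_indep_scale_invariant[OF CI R G'] by simp
  also have "\<dots> = measure (Q k) R * measure P (UNIV \<inter> ?G' \<inter> {x. 1 < x$k}) / s"
    using borel measure_exceed_pos[of k] by (simp add: measure_cond_law Int_ac)
  also have "\<dots> = measure (Q k) R * measure P (UNIV \<inter> G \<inter> {x. s < x$k})"
    using measure_Int_exceed_rescale[OF scale_invariant_UNIV _ borel(2) G(2) s] s by simp
  finally show ?thesis using s by simp
qed

lemma tendsto_measure_Int_exceed_zero:
  assumes "X \<in> sets borel"
  shows "(\<lambda>n. measure P (X \<inter> {x. 1 / Suc n < x$k})) \<longlonglongrightarrow> measure P (X \<inter> {x. 0 < x$k})"
proof -
  interpret prob_space P by (rule prob_space_P)
  have "incseq (\<lambda>n. X \<inter> {x. 1 / Suc n < x$k})"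
  proof (intro monoI subsetI)
    fix n n' :: nat and x assume "n \<le> n'" "x \<in> X \<inter> {x. 1 / Suc n < x$k}"
    moreover have "1 / real (Suc n') \<le> 1 / real (Suc n)"
      using \<open>n \<le> n'\<close> by (simp add: field_simps)
    ultimately show "x \<in> X \<inter> {x. 1 / Suc n' < x$k}" by auto
  qed
  moreover have "(\<Union>n. X \<inter> {x. 1 / Suc n < x$k}) = X \<inter> {x. 0 < x$k}"
  proof (intro set_eqI iffI)
    fix x assume "x \<in> X \<inter> {x. 0 < x$k}"
    then obtain n where "inverse (Suc n) < x$k" using reals_Archimedean by blast
    with \<open>x \<in> X \<inter> _\<close> show "x \<in> (\<Union>n. X \<inter> {x. 1 / Suc n < x$k})" by (auto simp: field_simps)
  qed (auto intro: less_trans[rotated])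
  moreover have "{x::real^'d. a < x$k} \<in> sets borel" for a by measurable
  then have "range (\<lambda>n. X \<inter> {x. 1 / Suc n < x$k}) \<subseteq> events" using assms by auto
  ultimately show ?thesis using finite_Lim_measure_incseq by metis
qed

lemma measure_Int_pos_eq_mult:
  assumes CI: "cond_indep (Q k) A {k} C"
    and R: "scale_invariant R" "R \<in> sets (coord_sigma (C \<union> {k}))"
    and G: "G \<in> sets (coord_sigma (A \<union> {k}))" "G \<subseteq> {x. 1 < x$m}"
  shows "measure P (R \<inter> G \<inter> {x. 0 < x$k}) = measure (Q k) R * measure P (G \<inter> {x. 0 < x$k})"
proof -
  have borel: "R \<in> sets borel" "G \<in> sets borel"
    using R(2) G(1) sets_coord_sigma_subset_borel by blast+
  have "(\<lambda>n. measure P (R \<inter> G \<inter> {x. 1 / Suc n < x$k})) \<longlonglongrightarrow> measure P (R \<inter> G \<inter> {x. 0 < x$k})"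
    using borel by (intro tendsto_measure_Int_exceed_zero) simp
  moreover have "measure P (R \<inter> G \<inter> {x. 1 / Suc n < x$k})
      = measure (Q k) R * measure P (G \<inter> {x. 1 / Suc n < x$k})" for n
    by (rule measure_Int_exceed_eq_mult[OF CI R G]) simp_all
  then have "(\<lambda>n. measure P (R \<inter> G \<inter> {x. 1 / Suc n < x$k}))
      \<longlonglongrightarrow> measure (Q k) R * measure P (G \<inter> {x. 0 < x$k})"
    using borel by (simp only:) (intro tendsto_mult_left tendsto_measure_Int_exceed_zero)
  ultimately show ?thesis by (rule LIMSEQ_unique)
qed

lemma measure_Int_exceed_root_eq_mult:
  assumes CI: "cond_indep (Q k) A {k} C"
    and R: "scale_invariant R" "R \<in> sets (coord_sigma (C \<union> {k}))"
    and H: "H \<in> sets (coord_sigma (A \<union> {k}))" and m: "m \<in> A \<union> {k}"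
    and pos: "AE x in Q m. 0 < x$k"
  shows "measure P (R \<inter> H \<inter> {x. 1 < x$m}) = measure (Q k) R * measure P (H \<inter> {x. 1 < x$m})"
proof -
  have borel: "R \<in> sets borel" "H \<in> sets borel"
    using R(2) H sets_coord_sigma_subset_borel by blast+
  have "AE x in P. 1 < x$m \<longrightarrow> 0 < x$k"
    using pos emeasure_exceed_nonzero_finite[of m] unfolding cond_law_def
    by (subst (asm) AE_uniform_measure) (auto simp: less_top[symmetric])
  then have drop_pos: "measure P (X \<inter> {x. 1 < x$m} \<inter> {x. 0 < x$k}) = measure P (X \<inter> {x. 1 < x$m})"
    if "X \<in> sets borel" for X
    using that by (intro measure_eq_AE) auto
  have "H \<inter> {x. 1 < x$m} \<in> sets (coord_sigma (A \<union> {k}))" "H \<inter> {x. 1 < x$m} \<subseteq> {x. 1 < x$m}"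
    using H coord_vimage_in_coord_sigma[OF m, of "{1<..}"] by auto
  from measure_Int_pos_eq_mult[OF CI R this] show ?thesis
    using drop_pos[of "R \<inter> H"] drop_pos[of H] borel by (simp add: Int_assoc)
qed

lemma cond_law_indep_scale_invariant_transfer:
  assumes CI: "cond_indep (Q k) A {k} C"
    and R: "scale_invariant R" "R \<in> sets (coord_sigma (C \<union> {k}))"
    and G: "G \<in> sets (coord_sigma (A \<union> {k}))" and m: "m \<in> A \<union> {k}"
    and pos: "AE x in Q m. 0 < x$k"
  shows "measure (Q m) (R \<inter> G) = measure (Q m) R * measure (Q m) G"
proof -
  have borel: "R \<in> sets borel" "G \<in> sets borel"
    using R(2) G sets_coord_sigma_subset_borel by blast+
  have "measure (Q m) R = measure (Q k) R"
    using measure_Int_exceed_root_eq_mult[OF CI R sets.top m pos] borel measure_exceed_pos[of m]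
    by (simp add: measure_cond_law Int_commute)
  with measure_Int_exceed_root_eq_mult[OF CI R G m pos] borel show ?thesis
    by (simp add: measure_cond_law Int_ac)
qed

end

section \<open>Additivity of the variogram\<close>

text \<open>
  Since \<open>ln 0 = 0\<close>, the difference \<open>ln (x$j) - ln (x$k)\<close> is scale invariant only where both
  coordinates are positive; it is therefore cut off to \<open>0\<close> elsewhere, which changes it only on
  a null set once the variogram exists.
\<close>

definition pos_log_ratio :: "'d \<Rightarrow> 'd \<Rightarrow> real^'d::finite \<Rightarrow> real" where
  "pos_log_ratio j k x = indicator {x. 0 < x$j \<and> 0 < x$k} x * (ln (x$j) - ln (x$k))"

lemma pos_log_ratio_scaleR: "0 < t \<Longrightarrow> pos_log_ratio j k (t *\<^sub>R x) = pos_log_ratio j k x"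
  by (cases "0 < x$j \<and> 0 < x$k") (simp_all add: pos_log_ratio_def ln_mult zero_less_mult_iff)

lemma measurable_coord_sigma_log_ratio:
  "i \<in> S \<Longrightarrow> k \<in> S \<Longrightarrow> (\<lambda>x. ln (x$i) - ln (x$k)) \<in> borel_measurable (coord_sigma S)"
  by (intro borel_measurable_diff borel_measurable_ln measurable_coord_sigma_vec_nth)

lemma measurable_coord_sigma_pos_log_ratio:
  assumes "j \<in> S" "k \<in> S"
  shows "pos_log_ratio j k \<in> borel_measurable (coord_sigma S)"
proof -
  have "{x. 0 < x$j \<and> 0 < x$k} = {x. x$j \<in> {0<..}} \<inter> {x. x$k \<in> {0<..}}" by auto
  also have "\<dots> \<in> sets (coord_sigma S)"
    using assms by (intro sets.Int coord_vimage_in_coord_sigma) simp_all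
  finally have "{x. 0 < x$j \<and> 0 < x$k} \<in> sets (coord_sigma S)" .
  then show ?thesis
    unfolding pos_log_ratio_def using measurable_coord_sigma_log_ratio[OF assms] by simp
qed

context pareto
begin

lemma indep_var_log_ratios:
  assumes CI: "cond_indep (Q k) A {k} C" and i: "i \<in> A" and j: "j \<in> C" and m: "m \<in> A \<union> {k}"
    and pos: "AE x in Q m. 0 < x$k"
  shows "prob_space.indep_var (Q m) borel (\<lambda>x. ln (x$i) - ln (x$k)) borel (pos_log_ratio j k)"
proof -
  interpret prob_space "Q m" by (rule prob_space_cond_law)
  have U: "(\<lambda>x. ln (x$i) - ln (x$k)) \<in> borel_measurable (coord_sigma (A \<union> {k}))"
    using i by (intro measurable_coord_sigma_log_ratio) auto
  have V: "pos_log_ratio j k \<in> borel_measurable (coord_sigma (C \<union> {k}))"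
    using j by (intro measurable_coord_sigma_pos_log_ratio) auto
  show ?thesis
  proof (rule indep_var_vimageI)
    show "random_variable borel (\<lambda>x. ln (x$i) - ln (x$k))" "random_variable borel (pos_log_ratio j k)"
      using U V by (auto intro: measurable_from_subalg[OF subalgebra_coord_sigma[OF sets_cond_law]])
  next
    fix S T :: "real set" assume "S \<in> sets borel" "T \<in> sets borel"
    then have "(\<lambda>x. ln (x$i) - ln (x$k)) -` S \<in> sets (coord_sigma (A \<union> {k}))"
      and V_T: "pos_log_ratio j k -` T \<in> sets (coord_sigma (C \<union> {k}))"
      using measurable_sets[OF U] measurable_sets[OF V] by auto
    moreover have "scale_invariant (pos_log_ratio j k -` T)"
      by (rule scale_invariant_vimage) (rule pos_log_ratio_scaleR)
    ultimately show "prob ((\<lambda>x. ln (x$i) - ln (x$k)) -` S \<inter> space (Q m) \<inter> (pos_log_ratio j k -` T \<inter> space (Q m)))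
        = prob ((\<lambda>x. ln (x$i) - ln (x$k)) -` S \<inter> space (Q m)) * prob (pos_log_ratio j k -` T \<inter> space (Q m))"
      using cond_law_indep_scale_invariant_transfer[OF CI \<open>scale_invariant _\<close> V_T \<open>_ -` S \<in> _\<close> m pos]
      by (simp add: Int_commute mult.commute)
  qed
qed

lemma variogram_sym: "variogram P m i j = variogram P m j i"
  unfolding variogram_def
  using prob_space.variance_uminus[OF prob_space_cond_law, of m "\<lambda>x. ln (x$i) - ln (x$j)"] by simp

lemma variogram_split:
  assumes VE: "variogram_exists P" and CI: "cond_indep (Q k) A {k} C"
    and i: "i \<in> A" and j: "j \<in> C" and m: "m \<in> A \<union> {k}"
  shows "variogram P m i j = variogram P m i k + variogram P m k j"
proof -
  interpret prob_space "Q m" by (rule prob_space_cond_law)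
  let ?U = "\<lambda>x. ln (x$i) - ln (x$k)" and ?V = "\<lambda>x. ln (x$j) - ln (x$k)"
  have pos: "AE x in Q m. 0 < x$l" for l using VE unfolding variogram_exists_def by blast
  have sq: "integrable (Q m) (\<lambda>x. (ln (x$a) - ln (x$b))\<^sup>2)" for a b
    using VE unfolding variogram_exists_def by blast
  have meas: "(\<lambda>x. ln (x$a) - ln (x$b)) \<in> borel_measurable (Q m)" for a b
    by (rule measurable_from_subalg[OF subalgebra_coord_sigma[OF sets_cond_law]])
       (rule measurable_coord_sigma_log_ratio[of _ UNIV]; simp)
  have "pos_log_ratio j k \<in> borel_measurable (Q m)"
    by (rule measurable_from_subalg[OF subalgebra_coord_sigma[OF sets_cond_law]])
       (rule measurable_coord_sigma_pos_log_ratio[of _ UNIV]; simp)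
  moreover have AE_eq: "AE x in Q m. pos_log_ratio j k x = ?V x"
    using pos[of j] pos[of k] by eventually_elim (simp add: pos_log_ratio_def)
  ultimately have "integrable (Q m) (\<lambda>x. (pos_log_ratio j k x)\<^sup>2)"
    by (intro integrable_cong_AE_imp[OF sq[of j k]]) (auto elim: AE_mp)
  have "variogram P m i j = variance (\<lambda>x. ?U x - ?V x)"
    unfolding variogram_def by simp
  also have "\<dots> = variance (\<lambda>x. ?U x - pos_log_ratio j k x)"
  proof (rule variance_cong_AE)
    show "AE x in Q m. ?U x - ?V x = ?U x - pos_log_ratio j k x"
      using AE_eq by eventually_elim simp
  qed (use meas \<open>pos_log_ratio j k \<in> _\<close> in simp_all)
  also have "\<dots> = variance ?U + variance (pos_log_ratio j k)"
    using indep_var_log_ratios[OF CI i j m pos] sq \<open>integrable (Q m) (\<lambda>x. (pos_log_ratio j k x)\<^sup>2)\<close>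
    by (rule variance_diff_indep)
  also have "variance (pos_log_ratio j k) = variance ?V"
    by (rule variance_cong_AE[OF AE_eq \<open>pos_log_ratio j k \<in> _\<close> meas])
  also have "\<dots> = variance (\<lambda>x. - ?V x)" by (rule variance_uminus[symmetric])
  finally show ?thesis unfolding variogram_def by simp
qed

lemma variogram_split_at_separator:
  assumes VE: "variogram_exists P" and CI: "cond_indep (Q k) A {k} C"
    and i: "i \<in> A" and j: "j \<in> C" and m: "m \<in> A \<union> C \<union> {k}"
  shows "variogram P m i j = variogram P m i k + variogram P m k j"
proof (cases "m \<in> A \<union> {k}")
  case True
  then show ?thesis by (rule variogram_split[OF VE CI i j])
next
  case False
  with m have "m \<in> C \<union> {k}" by blast
  from variogram_split[OF VE cond_indep_commute[OF CI] j i this] show ?thesis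
    using variogram_sym[of m j i] variogram_sym[of m j k] variogram_sym[of m k i] by linarith
qed

lemma variogram_split_at_second_vertex:
  assumes "is_tree E" "extremal_graphical P E" "variogram_exists P" "is_path E (i # k # ys)"
  shows "variogram P m i (last (k # ys)) = variogram P m i k + variogram P m k (last (k # ys))"
proof (cases "last (k # ys) = k")
  case True
  then show ?thesis by (simp add: variogram_def)
next
  case False
  let ?A = "reachable_avoiding E k i" and ?C = "UNIV - reachable_avoiding E k i - {k}"
  have "i \<noteq> k" using assms(4) by (simp add: is_path_def)
  have "?A \<inter> {k} = {}" "?A \<inter> ?C = {}" "{k} \<inter> ?C = {}"
    using avoided_notin_reachable_avoiding[of k E i] by auto
  with assms(2) separates_reachable_avoiding[of E k i] have "extremal_cond_indep P ?A {k} ?C"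
    unfolding extremal_graphical_def by simp
  then have "cond_indep (Q k) ?A {k} ?C" unfolding extremal_cond_indep_def by simp
  moreover have "last (k # ys) \<in> ?C"
    using tree_path_last_notin_reachable_avoiding[OF assms(1,4), of k] False by simp
  moreover have "i \<in> ?A" using \<open>i \<noteq> k\<close> by (rule start_in_reachable_avoiding)
  ultimately show ?thesis using variogram_split_at_separator[OF assms(3)] by blast
qed

lemma variogram_additive_along_path:
  assumes "is_tree E" "extremal_graphical P E" "variogram_exists P" "is_path E xs"
  shows "variogram P m (hd xs) (last xs) = (\<Sum>(s, t)\<in>path_edges xs. variogram P m s t)"
  using assms(4)
proof (induction xs)
  case Nil
  then show ?case by (simp add: is_path_def)
next
  case (Cons i xs)
  show ?case
  proof (cases xs)
    case Nil
    then show ?thesis by (simp add: variogram_def)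
  next
    case (Cons k ys)
    have "is_path E xs" "i \<notin> set xs"
      using Cons.prems \<open>xs = k # ys\<close> by (auto simp: is_path_iff_walk walk_Cons)
    then have "(i, k) \<notin> path_edges xs" using path_edges_subset[of xs] by blast
    then show ?thesis
      using Cons.IH[OF \<open>is_path E xs\<close>] variogram_split_at_second_vertex[OF assms(1-3)] Cons.prems
        \<open>xs = k # ys\<close> by (simp add: path_edges_Cons)
  qed
qed

end

theorem proposition4:
  fixes P :: "(real^'d::finite) measure" and E :: "('d \<times> 'd) set"
  assumes "multivariate_pareto P"
    and "is_tree E"
    and "extremal_graphical P E"
    and "variogram_exists P"
  shows "\<forall>m i j. variogram P m i j = (\<Sum>(s,t)\<in>ph E i j. variogram P m s t)"
proof (intro allI)
  interpret pareto P by (rule pareto.intro[OF assms(1)])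
  fix m i j
  obtain xs where xs: "is_path E xs" "hd xs = i" "last xs = j"
    using assms(2) unfolding is_tree_def by blast
  then have "ph E i j = path_edges xs" using ph_tree_path[OF assms(2) xs(1)] by simp
  with variogram_additive_along_path[OF assms(2-4) xs(1)] xs
  show "variogram P m i j = (\<Sum>(s,t)\<in>ph E i j. variogram P m s t)" by simp
qed

end
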